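(* Let $(x,y,z)$ be positive integers with $x<y$ satisfying $$(x-1)x(x+1)(y-1)y(y+1)=(z-1)z(z+1),$$ and put $k=y-x$. Then either $(x,y,z)=(F_{2n-1},F_{2n+1},F_{2n}^2)$ for some integer $n\ge1$, or $$1\le x\le -\tfrac12k+\tfrac12\sqrt{3k^2+2k\sqrt{k^2+4}+4}.$$
   Context: $F_m$ denotes the $m$-th Fibonacci number: $F_0=0$, $F_1=1$, $F_{m+1}=F_m+F_{m-1}$. *)

theory Defs
  imports Complex_Main "HOL-Number_Theory.Fib"
begin

end

theory Submission
  imports Defs
begin

text \<open>With \<open>u = x y\<close> the left-hand side equals \<open>u\<^sup>3 - u - u (x\<^sup>2 + y\<^sup>2 - 2)\<close>, which lies
  strictly below \<open>u\<^sup>3 - u\<close>. Since \<open>t \<mapsto> t\<^sup>3 - t\<close> is increasing on the non-negative integers,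
  \<open>z \<le> u - 1\<close>, and comparing with \<open>(u - 1)\<^sup>3 - (u - 1)\<close> yields \<open>x\<^sup>2 + y\<^sup>2 - 2 \<ge> 3 (u - 1)\<close>,
  i.e. \<open>x y \<le> k\<^sup>2 + 1\<close> for \<open>k = y - x\<close>. Hence \<open>(2x + k)\<^sup>2 = 4xy + k\<^sup>2 \<le> 5k\<^sup>2 + 4\<close>, and
  \<open>k\<^sup>2 \<le> k \<surd>(k\<^sup>2 + 4)\<close> gives the stated bound for every solution, Fibonacci or not.\<close>

lemma cube_minus_self_mono:
  fixes a b :: int
  assumes "0 \<le> a" and "a \<le> b"
  shows "a^3 - a \<le> b^3 - b"
proof (cases "b = 0")
  case False
  with assms have "b^2 \<ge> 1" by (simp add: one_le_power)
  moreover have "a * b \<ge> 0" "a^2 \<ge> 0" using assms by simp_all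
  ultimately have "(b - a) * (b^2 + a*b + a^2 - 1) \<ge> 0"
    using assms by (intro mult_nonneg_nonneg) linarith+
  moreover have "(b - a) * (b^2 + a*b + a^2 - 1) = (b^3 - b) - (a^3 - a)" by algebra
  ultimately show ?thesis by linarith
qed (use assms in simp)

lemma triple_product_eq_imp_mult_le:
  fixes x y z :: int
  assumes "0 < x" and "0 < z" and "x < y"
    and eq: "(x - 1) * x * (x + 1) * (y - 1) * y * (y + 1) = (z - 1) * z * (z + 1)"
  shows "x * y \<le> (y - x)^2 + 1"
proof -
  define u where "u = x * y"
  have "u > 0" unfolding u_def using assms by simp
  have z_cube: "z^3 - z = (u^3 - u) - u * (x^2 + y^2 - 2)"
    using eq unfolding u_def by algebra
  have "x^2 \<ge> 1" "y^2 \<ge> 4"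
    using assms power_mono[of 2 y 2] by (simp_all add: one_le_power)
  with \<open>u > 0\<close> have "u * (x^2 + y^2 - 2) > 0" by simp
  with z_cube have "z^3 - z < u^3 - u" by linarith
  hence "z \<le> u - 1"
    using cube_minus_self_mono[of u z] \<open>u > 0\<close> by (cases "u \<le> z") auto
  hence "z^3 - z \<le> (u - 1)^3 - (u - 1)"
    using cube_minus_self_mono \<open>0 < z\<close> by simp
  also have "\<dots> = (u^3 - u) - 3 * u * (u - 1)" by algebra
  finally have "u * (3 * (u - 1)) \<le> u * (x^2 + y^2 - 2)"
    using z_cube by (simp add: algebra_simps)
  hence "3 * (u - 1) \<le> x^2 + y^2 - 2"
    using \<open>u > 0\<close> by (simp add: mult_le_cancel_left)
  moreover have "x^2 + y^2 - 2 = (y - x)^2 + 2 * u - 2"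
    unfolding u_def by algebra
  ultimately show ?thesis unfolding u_def by (simp add: algebra_simps)
qed

lemma bound_of_mult_le_sq_diff_plus_one:
  fixes x k :: real
  assumes "0 \<le> k" and "x * (x + k) \<le> k^2 + 1"
  shows "x \<le> - (1/2) * k + (1/2) * sqrt (3 * k^2 + 2 * k * sqrt (k^2 + 4) + 4)"
proof -
  have "k^2 \<le> k * sqrt (k^2 + 4)"
    using \<open>0 \<le> k\<close> real_sqrt_le_mono[of "k^2" "k^2 + 4"]
    by (simp add: power2_eq_square mult_left_mono)
  moreover have "(2 * x + k)^2 = 4 * (x * (x + k)) + k^2"
    by (simp add: power2_eq_square algebra_simps)
  ultimately have "(2 * x + k)^2 \<le> 3 * k^2 + 2 * k * sqrt (k^2 + 4) + 4"
    using assms(2) by linarith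
  hence "2 * x + k \<le> sqrt (3 * k^2 + 2 * k * sqrt (k^2 + 4) + 4)"
    by (rule real_le_rsqrt)
  thus ?thesis by simp
qed

theorem theorem6:
  fixes x y z :: int
  assumes "0 < x" and "0 < y" and "0 < z" and "x < y"
    and "(x - 1) * x * (x + 1) * (y - 1) * y * (y + 1) = (z - 1) * z * (z + 1)"
  shows "(\<exists>n::nat. n \<ge> 1 \<and> x = int (fib (2*n - 1)) \<and> y = int (fib (2*n + 1))
            \<and> z = int (fib (2*n))^2)
         \<or> (1 \<le> x \<and> real_of_int x \<le> - (1/2) * real_of_int (y - x)
              + (1/2) * sqrt (3 * real_of_int (y - x)^2
                   + 2 * real_of_int (y - x) * sqrt (real_of_int (y - x)^2 + 4) + 4))"
proof (rule disjI2)
  have "x * (x + (y - x)) \<le> (y - x)^2 + 1"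
    using triple_product_eq_imp_mult_le assms by simp
  hence "real_of_int (x * (x + (y - x))) \<le> real_of_int ((y - x)^2 + 1)"
    by (simp only: of_int_le_iff)
  hence "real_of_int x * (real_of_int x + real_of_int (y - x)) \<le> real_of_int (y - x)^2 + 1"
    by (simp only: of_int_mult of_int_add of_int_power of_int_1)
  moreover have "0 \<le> real_of_int (y - x)" using assms by simp
  ultimately have "real_of_int x \<le> - (1/2) * real_of_int (y - x)
      + (1/2) * sqrt (3 * real_of_int (y - x)^2
           + 2 * real_of_int (y - x) * sqrt (real_of_int (y - x)^2 + 4) + 4)"
    by (rule bound_of_mult_le_sq_diff_plus_one[rotated])
  then show "1 \<le> x \<and> real_of_int x \<le> - (1/2) * real_of_int (y - x)
              + (1/2) * sqrt (3 * real_of_int (y - x)^2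
                   + 2 * real_of_int (y - x) * sqrt (real_of_int (y - x)^2 + 4) + 4)"
    using \<open>0 < x\<close> by simp
qed

end
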